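(* Consider the fixed-final-time optimal control problem described in the context. Along an optimal trajectory, the optimal Evader heading $\psi^*$ is constant backwards in time from the final time $T$ until either (1) the constraint is reached (i.e. $\|\mathbf{x}\|=1$), or (2) the initial condition $\mathbf{x}_0$ (time $0$) is reached.
   Context: Pursuer-fixed frame: the Evader's relative position $\mathbf{x}(t)=(x(t),y(t))\in\mathbb{R}^2$ evolves as $\dot x=\mu\cos\psi(t)-1$, $\dot y=\mu\sin\psi(t)$, $\mathbf{x}(0)=\mathbf{x}_0$ with $\|\mathbf{x}_0\|\ge1$, where $\mu\in(0,1)$ and $\psi(t)$ is the Evader's heading. For a fixed final time $T>0$, the Evader maximizes $\|\mathbf{x}(T)\|^2$ subject to the state constraint $\|\mathbf{x}(t)\|\ge 1$ for all $t\in[0,T]$. *)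

theory Defs
  imports "HOL-Analysis.Analysis"
begin

definition admissible_heading :: "real \<Rightarrow> (real \<Rightarrow> real) \<Rightarrow> bool" where
  "admissible_heading T \<psi> \<longleftrightarrow> set_borel_measurable lborel {0..T} \<psi>"

text \<open>Relative position in the Pursuer-fixed frame (solution of the ODE
  xdot = mu cos psi - 1, ydot = mu sin psi, x(0) = x0, in integral form).\<close>
definition traj :: "real \<Rightarrow> real \<times> real \<Rightarrow> (real \<Rightarrow> real) \<Rightarrow> real \<Rightarrow> real \<times> real" where
  "traj \<mu> x0 \<psi> t =
     (fst x0 + integral {0..t} (\<lambda>s. \<mu> * cos (\<psi> s) - 1),
      snd x0 + integral {0..t} (\<lambda>s. \<mu> * sin (\<psi> s)))"

definition feasible_heading :: "real \<Rightarrow> real \<times> real \<Rightarrow> real \<Rightarrow> (real \<Rightarrow> real) \<Rightarrow> bool" where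
  "feasible_heading \<mu> x0 T \<psi> \<longleftrightarrow>
     admissible_heading T \<psi> \<and> (\<forall>t\<in>{0..T}. norm (traj \<mu> x0 \<psi> t) \<ge> 1)"

definition optimal_heading :: "real \<Rightarrow> real \<times> real \<Rightarrow> real \<Rightarrow> (real \<Rightarrow> real) \<Rightarrow> bool" where
  "optimal_heading \<mu> x0 T \<psi> \<longleftrightarrow>
     feasible_heading \<mu> x0 T \<psi> \<and>
     (\<forall>\<phi>. feasible_heading \<mu> x0 T \<phi> \<longrightarrow>
            (norm (traj \<mu> x0 \<phi> T))\<^sup>2 \<le> (norm (traj \<mu> x0 \<psi> T))\<^sup>2)"

definition last_contact :: "real \<Rightarrow> real \<times> real \<Rightarrow> real \<Rightarrow> (real \<Rightarrow> real) \<Rightarrow> real" where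
  "last_contact \<mu> x0 T \<psi> = Sup ({t\<in>{0..T}. norm (traj \<mu> x0 \<psi> t) = 1} \<union> {0})"

end

theory Submission
  imports Defs
begin

text \<open>If the optimal heading were not a.e. equal to the final direction \<open>c\<close> of \<open>x(T)\<close> on
  some short window \<open>[a,b]\<close> after the last contact with the constraint, switching the heading
  to the constant \<open>c\<close> on that window keeps the trajectory outside the unit disc (it moves by
  at most \<open>4\<mu>(b - a)\<close>, less than its distance to the constraint) and shifts \<open>x(T)\<close> by a vector
  whose component along \<open>(cos c, sin c)\<close> is \<open>\<mu>\<integral>\<^sub>a\<^sup>b(1 - cos(c - \<psi>))\<close>. Optimality forces this
  to be \<open>\<le> 0\<close>, so \<open>\<psi> = c\<close> a.e. on the window. Short windows cover every \<open>[s,T]\<close> with \<open>s\<close>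
  after the last contact, and letting \<open>s\<close> decrease to it gives the result.\<close>

lemma set_integrable_comp_heading:
  fixes h :: "real \<Rightarrow> real"
  assumes "admissible_heading T \<psi>" "continuous_on UNIV h" "\<And>y. \<bar>h y\<bar> \<le> B"
    and "0 \<le> a" "b \<le> T"
  shows "set_integrable lborel {a..b} (\<lambda>s. h (\<psi> s))"
proof -
  have "(\<lambda>s. indicator {0..T} s *\<^sub>R \<psi> s) \<in> borel_measurable lborel"
    using assms(1) unfolding admissible_heading_def set_borel_measurable_def .
  moreover have "h \<in> borel_measurable borel"
    using assms(2) by (simp add: borel_measurable_continuous_onI)
  ultimately have "(\<lambda>s. h (indicator {0..T} s *\<^sub>R \<psi> s)) \<in> borel_measurable lborel"
    using measurable_compose by (auto simp: comp_def)
  moreover have "(\<lambda>s. indicator {a..b} s *\<^sub>R h (\<psi> s))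
      = (\<lambda>s. indicator {a..b} s *\<^sub>R h (indicator {0..T} s *\<^sub>R \<psi> s))"
    using assms(4,5) by (auto simp: indicator_def fun_eq_iff)
  ultimately show ?thesis
    unfolding set_integrable_def
    by (intro integrableI_bounded_set[where A="{a..b}" and B=B])
       (use assms(3) in \<open>auto simp: indicator_def emeasure_lborel_Icc_eq\<close>)
qed

lemma integrable_on_comp_heading:
  fixes h :: "real \<Rightarrow> real"
  assumes "admissible_heading T \<psi>" "continuous_on UNIV h" "\<And>y. \<bar>h y\<bar> \<le> B"
    and "0 \<le> a" "b \<le> T"
  shows "(\<lambda>s. h (\<psi> s)) integrable_on {a..b}"
  using set_borel_integral_eq_integral(1)[OF set_integrable_comp_heading[OF assms]] .

lemma abs_mult_cos_le: "\<bar>\<mu> * cos y\<bar> \<le> \<bar>\<mu>\<bar>" for \<mu> y :: real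
  by (simp add: abs_mult mult_left_le)

lemma abs_mult_sin_le: "\<bar>\<mu> * sin y\<bar> \<le> \<bar>\<mu>\<bar>" for \<mu> y :: real
  by (simp add: abs_mult mult_left_le)

lemma abs_mult_cos_minus_one_le: "\<bar>\<mu> * cos y - 1\<bar> \<le> \<bar>\<mu>\<bar> + 1" for \<mu> y :: real
  using abs_mult_cos_le[of \<mu> y] by linarith

lemma continuous_on_traj:
  assumes "admissible_heading T \<psi>"
  shows "continuous_on {0..T} (traj \<mu> x0 \<psi>)"
proof -
  have "(\<lambda>s. \<mu> * cos (\<psi> s) - 1) integrable_on {0..T}"
    by (intro integrable_on_comp_heading[where h="\<lambda>y. \<mu> * cos y - 1",
          OF assms _ abs_mult_cos_minus_one_le] continuous_intros) simp_all
  moreover have "(\<lambda>s. \<mu> * sin (\<psi> s)) integrable_on {0..T}"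
    by (intro integrable_on_comp_heading[where h="\<lambda>y. \<mu> * sin y",
          OF assms _ abs_mult_sin_le] continuous_intros) simp_all
  ultimately show ?thesis
    unfolding traj_def
    by (intro continuous_on_Pair continuous_on_add continuous_on_const
        indefinite_integral_continuous_1)
qed

definition heading_switch :: "real set \<Rightarrow> real \<Rightarrow> (real \<Rightarrow> real) \<Rightarrow> real \<Rightarrow> real" where
  "heading_switch I c \<psi> t = (if t \<in> I then c else \<psi> t)"

lemma admissible_heading_switch:
  assumes "admissible_heading T \<psi>"
  shows "admissible_heading T (heading_switch {a..b} c \<psi>)"
proof -
  have "(\<lambda>t. indicator {0..T} t *\<^sub>R heading_switch {a..b} c \<psi> t)
      = (\<lambda>t. if t \<in> {a..b} then indicator {0..T} t *\<^sub>R c else indicator {0..T} t *\<^sub>R \<psi> t)"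
    by (auto simp: heading_switch_def fun_eq_iff)
  then show ?thesis
    using assms unfolding admissible_heading_def set_borel_measurable_def
    by (simp only:) (rule measurable_If_set, auto)
qed

lemma integral_comp_heading_switch:
  fixes h :: "real \<Rightarrow> real"
  assumes "admissible_heading T \<psi>" "continuous_on UNIV h" "\<And>y. \<bar>h y\<bar> \<le> B"
    and "0 \<le> a" "t \<le> T"
  shows "integral {0..t} (\<lambda>s. h (heading_switch {a..b} c \<psi> s))
       = integral {0..t} (\<lambda>s. h (\<psi> s)) + integral {a..min b t} (\<lambda>s. h c - h (\<psi> s))"
proof -
  have "integral {0..t} (\<lambda>s. h (heading_switch {a..b} c \<psi> s)) - integral {0..t} (\<lambda>s. h (\<psi> s))
      = integral {0..t} (\<lambda>s. h (heading_switch {a..b} c \<psi> s) - h (\<psi> s))"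
    using assms
    by (intro integral_diff[symmetric] integrable_on_comp_heading admissible_heading_switch) auto
  also have "\<dots> = integral {0..t} (\<lambda>s. if s \<in> {a..b} then h c - h (\<psi> s) else 0)"
    by (rule integral_cong) (simp add: heading_switch_def)
  also have "\<dots> = integral {a..min b t} (\<lambda>s. h c - h (\<psi> s))"
  proof -
    have "{a..b} \<inter> {0..t} = {a..min b t}"
      using \<open>0 \<le> a\<close> by auto
    then show ?thesis
      by (simp only: integral_restrict_Int)
  qed
  finally show ?thesis by simp
qed

lemma traj_heading_switch:
  assumes "admissible_heading T \<psi>" "0 \<le> a" "t \<le> T"
  shows "traj \<mu> x0 (heading_switch {a..b} c \<psi>) t = traj \<mu> x0 \<psi> t +
           (integral {a..min b t} (\<lambda>s. \<mu> * (cos c - cos (\<psi> s))),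
            integral {a..min b t} (\<lambda>s. \<mu> * (sin c - sin (\<psi> s))))"
proof -
  from integral_comp_heading_switch[where h="\<lambda>y. \<mu> * cos y - 1" and b=b and c=c,
      OF assms(1) _ abs_mult_cos_minus_one_le assms(2,3)]
  have "integral {0..t} (\<lambda>s. \<mu> * cos (heading_switch {a..b} c \<psi> s) - 1)
      = integral {0..t} (\<lambda>s. \<mu> * cos (\<psi> s) - 1)
        + integral {a..min b t} (\<lambda>s. \<mu> * (cos c - cos (\<psi> s)))"
    by (simp add: continuous_intros algebra_simps)
  moreover from integral_comp_heading_switch[where h="\<lambda>y. \<mu> * sin y" and b=b and c=c,
      OF assms(1) _ abs_mult_sin_le assms(2,3)]
  have "integral {0..t} (\<lambda>s. \<mu> * sin (heading_switch {a..b} c \<psi> s))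
      = integral {0..t} (\<lambda>s. \<mu> * sin (\<psi> s))
        + integral {a..min b t} (\<lambda>s. \<mu> * (sin c - sin (\<psi> s)))"
    by (simp add: continuous_intros algebra_simps)
  ultimately show ?thesis
    by (simp add: traj_def)
qed

lemma integrable_on_heading_deviation:
  fixes f :: "real \<Rightarrow> real"
  assumes "admissible_heading T \<psi>" "continuous_on UNIV f" "\<And>y. \<bar>f y\<bar> \<le> 1"
    and "0 \<le> a" "b \<le> T"
  shows "(\<lambda>s. \<mu> * (f c - f (\<psi> s))) integrable_on {a..b}"
proof (rule integrable_on_comp_heading[where h="\<lambda>y. \<mu> * (f c - f y)" and B="2 * \<bar>\<mu>\<bar>"])
  show "\<bar>\<mu> * (f c - f y)\<bar> \<le> 2 * \<bar>\<mu>\<bar>" for y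
    using assms(3)[of c] assms(3)[of y] by (simp add: abs_mult mult_left_mono mult.commute)
qed (use assms in \<open>auto intro!: continuous_intros\<close>)

lemma abs_integral_heading_deviation_le:
  fixes f :: "real \<Rightarrow> real"
  assumes "admissible_heading T \<psi>" "continuous_on UNIV f" "\<And>y. \<bar>f y\<bar> \<le> 1"
    and "0 \<le> \<mu>" "0 \<le> a" "a \<le> b" "t \<le> T"
  shows "\<bar>integral {a..min b t} (\<lambda>s. \<mu> * (f c - f (\<psi> s)))\<bar> \<le> 2 * \<mu> * (b - a)"
proof -
  have bound: "\<bar>\<mu> * (f c - f y)\<bar> \<le> 2 * \<mu>" for y
    using assms(3)[of c] assms(3)[of y] \<open>0 \<le> \<mu>\<close>
    by (simp add: abs_mult mult_left_mono mult.commute)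
  have int: "(\<lambda>s. \<mu> * (f c - f (\<psi> s))) integrable_on {a..min b t}"
    using assms(7) by (intro integrable_on_heading_deviation[OF assms(1-3,5)]) simp
  have "norm (integral {a..min b t} (\<lambda>s. \<mu> * (f c - f (\<psi> s))))
      \<le> 2 * \<mu> * measure lborel {a..min b t}"
    unfolding cbox_interval[symmetric]
    by (rule has_integral_bound[OF _ integrable_integral[OF int[folded cbox_interval]]])
       (use bound \<open>0 \<le> \<mu>\<close> in auto)
  also have "\<dots> \<le> 2 * \<mu> * (b - a)"
    using \<open>0 \<le> \<mu>\<close> \<open>a \<le> b\<close> by (intro mult_left_mono) auto
  finally show ?thesis
    by simp
qed

lemma norm_traj_heading_switch_diff_le:
  assumes "admissible_heading T \<psi>" "0 \<le> \<mu>" "0 \<le> a" "a \<le> b" "t \<le> T"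
  shows "norm (traj \<mu> x0 (heading_switch {a..b} c \<psi>) t - traj \<mu> x0 \<psi> t) \<le> 4 * \<mu> * (b - a)"
proof -
  let ?I = "\<lambda>f. integral {a..min b t} (\<lambda>s. \<mu> * (f c - f (\<psi> s)))"
  have "norm (traj \<mu> x0 (heading_switch {a..b} c \<psi>) t - traj \<mu> x0 \<psi> t) = norm (?I cos, ?I sin)"
    using traj_heading_switch[OF assms(1,3,5)] by simp
  also have "\<dots> \<le> \<bar>?I cos\<bar> + \<bar>?I sin\<bar>"
    unfolding norm_Pair real_norm_def power2_abs by (rule sqrt_sum_squares_le_sum_abs)
  also have "\<dots> \<le> 4 * \<mu> * (b - a)"
    using abs_integral_heading_deviation_le[OF assms(1) _ _ assms(2-5), of cos c]
      abs_integral_heading_deviation_le[OF assms(1) _ _ assms(2-5), of sin c]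
    by (simp add: continuous_intros)
  finally show ?thesis .
qed

lemma feasible_heading_switch:
  assumes feasible: "feasible_heading \<mu> x0 T \<psi>" and "0 \<le> \<mu>" "0 \<le> a" "a \<le> b"
    and margin: "\<And>t. t \<in> {a..T} \<Longrightarrow> 1 + m \<le> norm (traj \<mu> x0 \<psi> t)"
    and short: "4 * \<mu> * (b - a) \<le> m"
  shows "feasible_heading \<mu> x0 T (heading_switch {a..b} c \<psi>)"
proof -
  have adm: "admissible_heading T \<psi>"
    using feasible unfolding feasible_heading_def by simp
  have "1 \<le> norm (traj \<mu> x0 (heading_switch {a..b} c \<psi>) t)" if t: "t \<in> {0..T}" for t
  proof (cases "t < a")
    case True
    then show ?thesis
      using traj_heading_switch[OF adm \<open>0 \<le> a\<close>, of t] t feasible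
      by (simp add: feasible_heading_def zero_prod_def[symmetric])
  next
    case False
    have "norm (traj \<mu> x0 \<psi> t) - norm (traj \<mu> x0 (heading_switch {a..b} c \<psi>) t)
        \<le> norm (traj \<mu> x0 (heading_switch {a..b} c \<psi>) t - traj \<mu> x0 \<psi> t)"
      using norm_triangle_ineq2 by (metis norm_minus_commute)
    also have "\<dots> \<le> m"
      using order.trans[OF norm_traj_heading_switch_diff_le[OF adm assms(2-4)] short] t by simp
    finally show ?thesis
      using margin[of t] t False by simp
  qed
  then show ?thesis
    using adm admissible_heading_switch unfolding feasible_heading_def by blast
qed

lemma cos_sin_projection_identity:
  "cos c * (cos c - cos y) + sin c * (sin c - sin y) = 1 - cos (c - y)" for c y :: real
proof -
  have "cos c * (cos c - cos y) + sin c * (sin c - sin y)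
      = ((sin c)\<^sup>2 + (cos c)\<^sup>2) - (cos c * cos y + sin c * sin y)"
    by (simp add: power2_eq_square algebra_simps)
  then show ?thesis
    by (simp add: cos_diff)
qed

lemma cos_sin_eq_if_cos_diff_eq_1:
  fixes c y :: real
  assumes "cos (c - y) = 1"
  shows "cos y = cos c \<and> sin y = sin c"
proof -
  have "(cos c - cos y)\<^sup>2 + (sin c - sin y)\<^sup>2
      = ((sin c)\<^sup>2 + (cos c)\<^sup>2) + ((sin y)\<^sup>2 + (cos y)\<^sup>2) - 2 * (cos c * cos y + sin c * sin y)"
    by (simp add: power2_eq_square algebra_simps)
  also have "\<dots> = 0"
    using assms by (simp add: cos_diff)
  finally show ?thesis
    by (simp add: sum_power2_eq_zero_iff)
qed

lemma inner_heading_switch_endpoint_shift: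
  assumes "admissible_heading T \<psi>" "0 \<le> a" "b \<le> T"
  shows "inner (traj \<mu> x0 (heading_switch {a..b} c \<psi>) T - traj \<mu> x0 \<psi> T) (cos c, sin c)
       = \<mu> * integral {a..b} (\<lambda>s. 1 - cos (c - \<psi> s))"
proof -
  let ?k = "\<lambda>f s. \<mu> * (f c - f (\<psi> s))"
  have int: "?k cos integrable_on {a..b}" "?k sin integrable_on {a..b}"
    by (intro integrable_on_heading_deviation[OF assms(1) _ _ assms(2,3)] continuous_intros; simp)+
  have "inner (traj \<mu> x0 (heading_switch {a..b} c \<psi>) T - traj \<mu> x0 \<psi> T) (cos c, sin c)
      = cos c * integral {a..b} (?k cos) + sin c * integral {a..b} (?k sin)"
    using traj_heading_switch[OF assms(1,2) order_refl] \<open>b \<le> T\<close> by (simp add: min_absorb1 mult.commute)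
  also have "\<dots> = integral {a..b} (\<lambda>s. cos c * ?k cos s + sin c * ?k sin s)"
    using integral_add[OF integrable_on_cmult_left[OF int(1), of "cos c"]
        integrable_on_cmult_left[OF int(2), of "sin c"]]
    by simp
  also have "\<dots> = integral {a..b} (\<lambda>s. \<mu> * (1 - cos (c - \<psi> s)))"
  proof (rule integral_cong)
    fix s
    have "cos c * ?k cos s + sin c * ?k sin s
        = \<mu> * (cos c * (cos c - cos (\<psi> s)) + sin c * (sin c - sin (\<psi> s)))"
      by algebra
    then show "cos c * ?k cos s + sin c * ?k sin s = \<mu> * (1 - cos (c - \<psi> s))"
      by (simp only: cos_sin_projection_identity)
  qed
  finally show ?thesis
    by simp
qed

lemma inner_nonpos_if_norm_add_le:
  fixes x d :: "'a::real_inner"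
  assumes "norm (x + d) \<le> norm x"
  shows "inner x d \<le> 0"
proof -
  have "(norm x)\<^sup>2 + 2 * inner x d + (norm d)\<^sup>2 = (norm (x + d))\<^sup>2"
    by (simp add: power2_norm_eq_inner inner_add inner_commute)
  also have "\<dots> \<le> (norm x)\<^sup>2"
    using assms by (simp add: power_mono)
  finally show ?thesis
    using zero_le_power2[of "norm d"] by linarith
qed

lemma AE_eq_0_if_nonneg_integral_nonpos:
  fixes f :: "real \<Rightarrow> real"
  assumes "set_integrable lborel {a..b} f" "\<And>t. t \<in> {a..b} \<Longrightarrow> 0 \<le> f t"
    and "integral {a..b} f \<le> 0"
  shows "AE t in lborel. t \<in> {a..b} \<longrightarrow> f t = 0"
proof -
  let ?g = "\<lambda>t. indicator {a..b} t *\<^sub>R f t"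
  have nonneg: "AE t in lborel. 0 \<le> ?g t"
    using assms(2) by (intro AE_I2) (simp add: indicator_def)
  have "integral\<^sup>L lborel ?g = integral {a..b} f"
    using set_borel_integral_eq_integral(2)[OF assms(1)] by (simp add: set_lebesgue_integral_def)
  then have "integral\<^sup>L lborel ?g = 0"
    using assms(3) integral_nonneg_AE[OF nonneg] by linarith
  then have "AE t in lborel. ?g t = 0"
    using integral_nonneg_eq_0_iff_AE[OF assms(1)[unfolded set_integrable_def] nonneg] by simp
  then show ?thesis
    by eventually_elim (simp add: indicator_def)
qed

lemma optimal_heading_const_on_window:
  assumes "0 < \<mu>" and optimal: "optimal_heading \<mu> x0 T \<psi>"
    and final: "traj \<mu> x0 \<psi> T = r *\<^sub>R (cos c, sin c)" "0 < r"
    and "0 \<le> a" "a \<le> b" "b \<le> T"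
    and margin: "\<And>t. t \<in> {a..T} \<Longrightarrow> 1 + m \<le> norm (traj \<mu> x0 \<psi> t)"
    and short: "4 * \<mu> * (b - a) \<le> m"
  shows "AE t in lborel. t \<in> {a..b} \<longrightarrow> cos (\<psi> t) = cos c \<and> sin (\<psi> t) = sin c"
proof -
  let ?\<phi> = "heading_switch {a..b} c \<psi>"
  let ?X = "traj \<mu> x0 \<psi> T" and ?D = "traj \<mu> x0 ?\<phi> T - traj \<mu> x0 \<psi> T"
  have feasible: "feasible_heading \<mu> x0 T \<psi>" and adm: "admissible_heading T \<psi>"
    using optimal unfolding optimal_heading_def feasible_heading_def by auto
  have "feasible_heading \<mu> x0 T ?\<phi>"
    using feasible_heading_switch[OF feasible _ \<open>0 \<le> a\<close> \<open>a \<le> b\<close> margin short] \<open>0 < \<mu>\<close> by simp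
  then have "(norm (traj \<mu> x0 ?\<phi> T))\<^sup>2 \<le> (norm ?X)\<^sup>2"
    using optimal unfolding optimal_heading_def by blast
  then have "norm (?X + ?D) \<le> norm ?X"
    by (metis add.commute diff_add_cancel norm_ge_zero power2_le_imp_le)
  then have "inner ?X ?D \<le> 0"
    by (rule inner_nonpos_if_norm_add_le)
  then have "r * inner ?D (cos c, sin c) \<le> 0"
    by (metis final(1) inner_commute inner_scaleR_left)
  then have "\<mu> * integral {a..b} (\<lambda>s. 1 - cos (c - \<psi> s)) \<le> 0"
    using \<open>0 < r\<close> inner_heading_switch_endpoint_shift[OF adm \<open>0 \<le> a\<close> \<open>b \<le> T\<close>]
    by (simp add: mult_le_0_iff)
  then have "integral {a..b} (\<lambda>s. 1 - cos (c - \<psi> s)) \<le> 0"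
    using \<open>0 < \<mu>\<close> by (simp add: mult_le_0_iff)
  moreover have "set_integrable lborel {a..b} (\<lambda>s. 1 - cos (c - \<psi> s))"
  proof (rule set_integrable_comp_heading[OF adm _ _ \<open>0 \<le> a\<close> \<open>b \<le> T\<close>])
    show "\<bar>1 - cos (c - y)\<bar> \<le> 2" for y
      using cos_ge_minus_one[of "c - y"] cos_le_one[of "c - y"] by linarith
  qed (intro continuous_intros)
  ultimately have "AE t in lborel. t \<in> {a..b} \<longrightarrow> 1 - cos (c - \<psi> t) = 0"
    by (intro AE_eq_0_if_nonneg_integral_nonpos) auto
  then show ?thesis
    by eventually_elim (simp add: cos_sin_eq_if_cos_diff_eq_1)
qed

lemma AE_on_Icc_if_AE_on_short_subintervals:
  fixes P :: "real \<Rightarrow> bool"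
  assumes "0 < \<delta>"
    and short: "\<And>a b. s \<le> a \<Longrightarrow> a \<le> b \<Longrightarrow> b \<le> T \<Longrightarrow> b - a \<le> \<delta> \<Longrightarrow>
                  AE t in lborel. t \<in> {a..b} \<longrightarrow> P t"
  shows "AE t in lborel. t \<in> {s..T} \<longrightarrow> P t"
proof (cases "s \<le> T")
  case False
  then show ?thesis
    by (intro AE_I2) auto
next
  case True
  obtain n :: nat where n: "(T - s) / \<delta> \<le> real n"
    using real_arch_simple by blast
  define h where "h = (T - s) / real (Suc n)"
  have "0 \<le> h"
    using True by (simp add: h_def)
  have "s + real (Suc n) * h = T"
    by (simp add: h_def)
  have "T - s \<le> \<delta> * real (Suc n)"
    using n \<open>0 < \<delta>\<close> by (simp add: divide_le_eq algebra_simps)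
  then have "h \<le> \<delta>"
    by (simp add: h_def divide_le_eq mult.commute)
  have "AE t in lborel. t \<in> {s..s + real k * h} \<longrightarrow> P t" if "k \<le> Suc n" for k
    using that
  proof (induction k)
    case 0
    show ?case
      using short[of s s] True \<open>0 < \<delta>\<close> by simp
  next
    case (Suc k)
    have "s + real (Suc k) * h \<le> s + real (Suc n) * h"
      using Suc.prems \<open>0 \<le> h\<close> by (intro add_left_mono mult_right_mono) auto
    then have "AE t in lborel. t \<in> {s + real k * h..s + real (Suc k) * h} \<longrightarrow> P t"
      using \<open>0 \<le> h\<close> \<open>h \<le> \<delta>\<close> \<open>s + real (Suc n) * h = T\<close>
      by (intro short) (auto simp: algebra_simps)
    moreover have "AE t in lborel. t \<in> {s..s + real k * h} \<longrightarrow> P t"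
      using Suc by simp
    ultimately show ?case
      by eventually_elim auto
  qed
  from this[of "Suc n"] show ?thesis
    using \<open>s + real (Suc n) * h = T\<close> by simp
qed

lemma AE_on_Icc_if_AE_on_truncations:
  fixes P :: "real \<Rightarrow> bool"
  assumes "\<And>s. \<tau> < s \<Longrightarrow> s \<le> T \<Longrightarrow> AE t in lborel. t \<in> {s..T} \<longrightarrow> P t"
  shows "AE t in lborel. t \<in> {\<tau>..T} \<longrightarrow> P t"
proof -
  have "AE t in lborel. \<forall>n::nat. t \<in> {\<tau> + inverse (Suc n)..T} \<longrightarrow> P t"
  proof (unfold AE_all_countable, intro allI)
    fix n :: nat
    show "AE t in lborel. t \<in> {\<tau> + inverse (Suc n)..T} \<longrightarrow> P t"
    proof (cases "\<tau> + inverse (Suc n) \<le> T")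
      case True
      then show ?thesis
        by (intro assms) simp_all
    qed (intro AE_I2, simp)
  qed
  moreover have "AE t in lborel. t \<noteq> \<tau>"
    by (rule AE_lborel_singleton)
  ultimately show ?thesis
  proof eventually_elim
    case (elim t)
    show ?case
    proof
      assume t: "t \<in> {\<tau>..T}"
      with elim(2) have "0 < t - \<tau>"
        by simp
      then obtain n where "inverse (real (Suc n)) < t - \<tau>"
        using reals_Archimedean by blast
      then show "P t"
        using elim(1)[rule_format, of n] t by simp
    qed
  qed
qed

lemma compact_exists_uniform_gap:
  fixes f :: "'a::topological_space \<Rightarrow> real"
  assumes "compact S" "continuous_on S f" "\<And>t. t \<in> S \<Longrightarrow> c < f t"
  shows "\<exists>m>0. \<forall>t\<in>S. c + m \<le> f t"
proof (cases "S = {}")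
  case False
  then obtain t0 where "t0 \<in> S" "\<forall>t\<in>S. f t0 \<le> f t"
    using continuous_attains_inf[OF assms(1) False assms(2)] by blast
  then show ?thesis
    using assms(3)[of t0] by (intro exI[of _ "f t0 - c"]) auto
next
  case True
  then show ?thesis
    by (intro exI[of _ 1]) simp
qed

lemma last_contact_nonneg: "0 \<le> last_contact \<mu> x0 T \<psi>"
  unfolding last_contact_def
  by (rule cSup_upper) (auto simp: bdd_above_def intro: exI[of _ "max 0 T"])

lemma norm_traj_gt_1_after_last_contact:
  assumes "feasible_heading \<mu> x0 T \<psi>" "t \<in> {0..T}" "last_contact \<mu> x0 T \<psi> < t"
  shows "1 < norm (traj \<mu> x0 \<psi> t)"
proof -
  have "norm (traj \<mu> x0 \<psi> t) \<noteq> 1"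
  proof
    assume "norm (traj \<mu> x0 \<psi> t) = 1"
    then have "t \<le> last_contact \<mu> x0 T \<psi>"
      unfolding last_contact_def using assms(2)
      by (intro cSup_upper) (auto simp: bdd_above_def intro: exI[of _ "max 0 T"])
    with assms(3) show False
      by simp
  qed
  moreover have "1 \<le> norm (traj \<mu> x0 \<psi> t)"
    using assms(1,2) unfolding feasible_heading_def by blast
  ultimately show ?thesis
    by simp
qed

lemma optimal_heading_const_after_last_contact:
  assumes "0 < \<mu>" and optimal: "optimal_heading \<mu> x0 T \<psi>"
    and final: "traj \<mu> x0 \<psi> T = r *\<^sub>R (cos c, sin c)" "0 < r"
    and "last_contact \<mu> x0 T \<psi> < s" "s \<le> T"
  shows "AE t in lborel. t \<in> {s..T} \<longrightarrow> cos (\<psi> t) = cos c \<and> sin (\<psi> t) = sin c"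
proof -
  have feasible: "feasible_heading \<mu> x0 T \<psi>"
    using optimal unfolding optimal_heading_def by blast
  have "0 \<le> s"
    using last_contact_nonneg[of \<mu> x0 T \<psi>] assms(5) by simp
  have "continuous_on {s..T} (\<lambda>t. norm (traj \<mu> x0 \<psi> t))"
    using feasible \<open>0 \<le> s\<close> unfolding feasible_heading_def
    by (intro continuous_on_norm continuous_on_subset[OF continuous_on_traj]) auto
  moreover have "1 < norm (traj \<mu> x0 \<psi> t)" if "t \<in> {s..T}" for t
    using norm_traj_gt_1_after_last_contact[OF feasible] that \<open>0 \<le> s\<close> assms(5) by simp
  ultimately obtain m where "0 < m" and margin: "\<forall>t\<in>{s..T}. 1 + m \<le> norm (traj \<mu> x0 \<psi> t)"
    using compact_exists_uniform_gap[OF compact_Icc] by blast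
  show ?thesis
  proof (rule AE_on_Icc_if_AE_on_short_subintervals[where \<delta>="m / (4 * \<mu>)"])
    fix a b
    assume "s \<le> a" "a \<le> b" "b \<le> T" "b - a \<le> m / (4 * \<mu>)"
    then have "4 * \<mu> * (b - a) \<le> m"
      using \<open>0 < \<mu>\<close> by (simp add: le_divide_eq algebra_simps)
    from optimal_heading_const_on_window[OF \<open>0 < \<mu>\<close> optimal final _ \<open>a \<le> b\<close> \<open>b \<le> T\<close> _ this]
    show "AE t in lborel. t \<in> {a..b} \<longrightarrow> cos (\<psi> t) = cos c \<and> sin (\<psi> t) = sin c"
      using margin \<open>0 \<le> s\<close> \<open>s \<le> a\<close> by simp
  qed (use \<open>0 < m\<close> \<open>0 < \<mu>\<close> in simp)
qed

lemma exists_polar_form: "\<exists>c. x = norm x *\<^sub>R (cos c, sin c)" for x :: "real \<times> real"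
proof (cases "x = 0")
  case False
  obtain a b where x: "x = (a, b)"
    by fastforce
  have "(a / norm x)\<^sup>2 + (b / norm x)\<^sup>2 = 1"
    using False by (simp add: x zero_prod_def norm_Pair power_divide add_divide_distrib[symmetric])
  then obtain c where "a / norm x = cos c" "b / norm x = sin c"
    using sincos_total_2pi by metis
  then have "x = norm x *\<^sub>R (cos c, sin c)"
    using False by (simp add: x field_simps)
  then show ?thesis ..
qed (simp add: zero_prod_def)

theorem lemma4:
  fixes \<mu> T :: real and x0 :: "real \<times> real" and \<psi> :: "real \<Rightarrow> real"
  assumes "0 < \<mu>" "\<mu> < 1" "0 < T" "norm x0 \<ge> 1"
    and "optimal_heading \<mu> x0 T \<psi>"
  shows "\<exists>c. AE t in lborel. t \<in> {last_contact \<mu> x0 T \<psi> .. T} \<longrightarrow>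
            cos (\<psi> t) = cos c \<and> sin (\<psi> t) = sin c"
proof -
  let ?X = "traj \<mu> x0 \<psi> T"
  have "feasible_heading \<mu> x0 T \<psi>"
    using assms(5) unfolding optimal_heading_def by blast
  then have "1 \<le> norm ?X"
    using assms(3) unfolding feasible_heading_def by simp
  then have "0 < norm ?X"
    by linarith
  from exists_polar_form[of ?X]
  obtain c where polar: "?X = norm ?X *\<^sub>R (cos c, sin c)" ..
  show ?thesis
  proof (rule exI[of _ c], rule AE_on_Icc_if_AE_on_truncations)
    fix s
    assume "last_contact \<mu> x0 T \<psi> < s" "s \<le> T"
    then show "AE t in lborel. t \<in> {s..T} \<longrightarrow> cos (\<psi> t) = cos c \<and> sin (\<psi> t) = sin c"
      by (rule optimal_heading_const_after_last_contact[OF assms(1,5) polar \<open>0 < norm ?X\<close>])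
  qed
qed

end
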